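(* Let $S=\{0,a,b\}\subseteq\mathbb{Z}$ with $a,b>0$, $a$ even and $b$ odd. Let $\chi$ be the alternating block 4-coloring of $\mathbb{Z}$ relative to $S$. Then every translate $n+S=\{n,n+a,n+b\}$, $n\in\mathbb{Z}$, contains elements of three different colors under $\chi$.
   Context: The alternating block 4-coloring relative to $S=\{0,a,b\}$ is defined as follows. For $m\in\mathbb{Z}$, let $q_m,r_m$ be the unique integers with $m=2aq_m+r_m$ and $-a\le r_m<a$. Let $X(m)=0$ if $r_m\ge0$ and $X(m)=1$ otherwise; let $Y(m)=0$ if $m$ is even and $Y(m)=1$ otherwise. Then $\chi(m)=(X(m),Y(m))$, a coloring with four colors. *)

theory Defs
  imports Main
begin

definition blk_rem :: "int \<Rightarrow> int \<Rightarrow> int" where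
  "blk_rem a m = (THE r. \<exists>q. m = 2 * a * q + r \<and> - a \<le> r \<and> r < a)"

definition colX :: "int \<Rightarrow> int \<Rightarrow> nat" where
  "colX a m = (if blk_rem a m \<ge> 0 then 0 else 1)"

definition colY :: "int \<Rightarrow> nat" where
  "colY m = (if even m then 0 else 1)"

text \<open>Alternating block 4-coloring relative to S = {0,a,b} (depends only on a).\<close>
definition alt_block_coloring :: "int \<Rightarrow> int \<Rightarrow> nat \<times> nat" where
  "alt_block_coloring a m = (colX a m, colY m)"

end

theory Submission
  imports Defs
begin

text \<open>Shifting by \<open>a\<close> moves \<open>m\<close> to the neighbouring block of length \<open>a\<close>, which flips the
sign of the centred remainder and hence the first colour coordinate; since \<open>a\<close> is even
it keeps the parity. Shifting by the odd \<open>b\<close> flips the parity.\<close>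

lemma blk_rem_eq_mod:
  assumes "a > 0"
  shows "blk_rem a m = (m + a) mod (2 * a) - a"
  unfolding blk_rem_def
proof (rule the_equality)
  show "\<exists>q. m = 2 * a * q + ((m + a) mod (2 * a) - a)
          \<and> - a \<le> (m + a) mod (2 * a) - a \<and> (m + a) mod (2 * a) - a < a"
  proof (intro exI conjI)
    show "m = 2 * a * ((m + a) div (2 * a)) + ((m + a) mod (2 * a) - a)"
      using div_mult_mod_eq [of "m + a" "2 * a"] by (simp add: algebra_simps)
  qed (use assms in simp_all)
next
  fix r assume "\<exists>q. m = 2 * a * q + r \<and> - a \<le> r \<and> r < a"
  then obtain q where m: "m = 2 * a * q + r" and r: "- a \<le> r" "r < a" by blast
  have "(m + a) mod (2 * a) = (r + a + q * (2 * a)) mod (2 * a)"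
    using m by (simp add: algebra_simps)
  also have "\<dots> = r + a"
    using r by (simp add: mod_pos_pos_trivial)
  finally show "r = (m + a) mod (2 * a) - a" by simp
qed

lemma colX_eq_0_iff:
  assumes "a > 0"
  shows "colX a m = 0 \<longleftrightarrow> a \<le> (m + a) mod (2 * a)"
  using assms by (simp add: colX_def blk_rem_eq_mod)

lemma colX_add_shift:
  assumes "a > 0"
  shows "colX a (m + a) \<noteq> colX a m"
proof -
  define r where "r = (m + a) mod (2 * a)"
  have r: "0 \<le> r" "r < 2 * a"
    using assms by (simp_all add: r_def)
  have "(m + a + a) mod (2 * a) = (r + a) mod (2 * a)"
    unfolding r_def by (rule mod_add_left_eq [symmetric])
  also have "\<dots> = (if r < a then r + a else r - a)"
  proof (cases "r < a")
    case False
    have "(r + a) mod (2 * a) = (r - a + 1 * (2 * a)) mod (2 * a)"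
      by (simp add: algebra_simps)
    also have "\<dots> = r - a"
      unfolding mod_mult_self1 using r False by (simp add: mod_pos_pos_trivial)
    finally show ?thesis
      using False by simp
  qed (use r in \<open>simp add: mod_pos_pos_trivial\<close>)
  finally have "(m + a + a) mod (2 * a) = (if r < a then r + a else r - a)" .
  then have "a \<le> (m + a + a) mod (2 * a) \<longleftrightarrow> \<not> a \<le> r"
    using r by auto
  then have "colX a (m + a) = 0 \<longleftrightarrow> colX a m \<noteq> 0"
    using colX_eq_0_iff [OF assms] unfolding r_def by simp
  then show ?thesis
    by auto
qed

lemma colY_add_even: "even k \<Longrightarrow> colY (m + k) = colY m"
  by (simp add: colY_def)

lemma colY_add_odd: "odd k \<Longrightarrow> colY (m + k) \<noteq> colY m"
  by (simp add: colY_def)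

theorem mainTheorem20:
  fixes a b :: int
  assumes "a > 0" and "b > 0" and "even a" and "odd b"
  shows "\<forall>n::int. card (alt_block_coloring a ` {n, n + a, n + b}) = 3"
proof
  fix n
  let ?\<chi> = "alt_block_coloring a"
  have "?\<chi> n \<noteq> ?\<chi> (n + a)"
    using colX_add_shift [OF \<open>a > 0\<close>, of n] by (auto simp: alt_block_coloring_def)
  moreover have "?\<chi> n \<noteq> ?\<chi> (n + b)" and "?\<chi> (n + a) \<noteq> ?\<chi> (n + b)"
    using colY_add_odd [OF \<open>odd b\<close>, of n] colY_add_even [OF \<open>even a\<close>, of n]
    by (simp_all add: alt_block_coloring_def)
  ultimately show "card (?\<chi> ` {n, n + a, n + b}) = 3"
    by simp
qed

end
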